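(* In type $C_\infty$, let $\lambda$ be a partition of $n$ with charge $\kappa\in\mathbb Z$ and let $A$ be a Garnir node of $[\lambda]$. Then there is no row-strict $\lambda$-tableau $\mathsf t$ with $\mathsf t\rhd\mathsf g^A$ and $\mathrm{res}\,\mathsf t=\mathrm{res}\,\mathsf g^A$.
   Context: Residues in type $C_\infty$: node $(r,c)$ of $\lambda$ has residue $|\kappa+c-r|\in\mathbb Z_{\ge0}$; for a tableau $\mathsf t$ (bijection $[\lambda]\to\{1,\dots,n\}$), $\mathrm{res}\,\mathsf t=(\mathrm{res}\,\mathsf t^{-1}(1),\dots,\mathrm{res}\,\mathsf t^{-1}(n))$. Row-strict means entries increase along rows. $\mathsf t^\lambda$ is the initial tableau (entries in order along successive rows), $w^{\mathsf t}\in\mathfrak S_n$ satisfies $w^{\mathsf t}\mathsf t^\lambda=\mathsf t$ ($\mathfrak S_n$ acting on entries). Dominance order on tableaux: $\mathsf t\trianglerighteq\mathsf s$ iff $w^{\mathsf t}\preccurlyeq w^{\mathsf s}$ in Bruhat order; $\mathsf t\rhd\mathsf s$ means $\mathsf t\trianglerighteq\mathsf s$ and $\mathsf t\ne\mathsf s$. A Garnir node is $A=(r,c)$ with $(r+1,c)\in[\lambda]$; the Garnir tableau $\mathsf g^A$ agrees with $\mathsf t^\lambda$ outside the belt $\{(r,a):a\ge c\}\cup\{(r+1,a):a\le c\}$ and fills the belt with $\mathsf t^\lambda(r,c),\dots,\mathsf t^\lambda(r+1,c)$, first along row $r+1$ left to right, then along row $r$ left to right. *)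

theory Defs
  imports Main
begin

definition is_partition :: "nat list \<Rightarrow> nat \<Rightarrow> bool" where
  "is_partition lam n \<longleftrightarrow> sorted (rev lam) \<and> (\<forall>x\<in>set lam. 0 < x) \<and> sum_list lam = n"

definition diagram :: "nat list \<Rightarrow> (nat \<times> nat) set" where
  "diagram lam = {(r, c). 1 \<le> r \<and> r \<le> length lam \<and> 1 \<le> c \<and> c \<le> lam ! (r - 1)}"

(* A lambda-tableau: bijection [lambda] -> {1..n}; normalised to 0 off the diagram,
   so that tableaux are equal iff they agree on [lambda]. *)
definition tableau :: "nat list \<Rightarrow> nat \<Rightarrow> (nat \<times> nat \<Rightarrow> nat) \<Rightarrow> bool" where
  "tableau lam n t \<longleftrightarrow> bij_betw t (diagram lam) {1..n} \<and> (\<forall>x. x \<notin> diagram lam \<longrightarrow> t x = 0)"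

definition row_strict :: "nat list \<Rightarrow> (nat \<times> nat \<Rightarrow> nat) \<Rightarrow> bool" where
  "row_strict lam t \<longleftrightarrow>
     (\<forall>r c c'. (r, c) \<in> diagram lam \<and> (r, c') \<in> diagram lam \<and> c < c' \<longrightarrow> t (r, c) < t (r, c'))"

definition node_res :: "int \<Rightarrow> nat \<times> nat \<Rightarrow> nat" where
  "node_res kappa x = nat \<bar>kappa + int (snd x) - int (fst x)\<bar>"

definition res_seq :: "int \<Rightarrow> nat list \<Rightarrow> nat \<Rightarrow> (nat \<times> nat \<Rightarrow> nat) \<Rightarrow> nat list" where
  "res_seq kappa lam n t = map (\<lambda>k. node_res kappa (the_inv_into (diagram lam) t k)) [1..<n+1]"

definition init_tab :: "nat list \<Rightarrow> nat \<times> nat \<Rightarrow> nat" where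
  "init_tab lam x = (if x \<in> diagram lam then sum_list (take (fst x - 1) lam) + snd x else 0)"

definition perm_of_tab :: "nat list \<Rightarrow> nat \<Rightarrow> (nat \<times> nat \<Rightarrow> nat) \<Rightarrow> nat \<Rightarrow> nat" where
  "perm_of_tab lam n t k = (if k \<in> {1..n} then t (the_inv_into (diagram lam) (init_tab lam) k) else k)"

definition perm_length :: "nat \<Rightarrow> (nat \<Rightarrow> nat) \<Rightarrow> nat" where
  "perm_length n w = card {(i, j). i \<in> {1..n} \<and> j \<in> {1..n} \<and> i < j \<and> w j < w i}"

definition transp :: "nat \<Rightarrow> nat \<Rightarrow> nat \<Rightarrow> nat" where
  "transp i j x = (if x = i then j else if x = j then i else x)"

definition bruhat_step :: "nat \<Rightarrow> (nat \<Rightarrow> nat) \<Rightarrow> (nat \<Rightarrow> nat) \<Rightarrow> bool" where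
  "bruhat_step n u v \<longleftrightarrow> (\<exists>i j. i \<in> {1..n} \<and> j \<in> {1..n} \<and> i < j \<and> v = u \<circ> transp i j
                          \<and> perm_length n u < perm_length n v)"

definition bruhat_le :: "nat \<Rightarrow> (nat \<Rightarrow> nat) \<Rightarrow> (nat \<Rightarrow> nat) \<Rightarrow> bool" where
  "bruhat_le n u v \<longleftrightarrow> (bruhat_step n)\<^sup>*\<^sup>* u v"

definition tab_dom :: "nat list \<Rightarrow> nat \<Rightarrow> (nat \<times> nat \<Rightarrow> nat) \<Rightarrow> (nat \<times> nat \<Rightarrow> nat) \<Rightarrow> bool" where
  "tab_dom lam n t s \<longleftrightarrow> bruhat_le n (perm_of_tab lam n t) (perm_of_tab lam n s)"

definition tab_dom_strict :: "nat list \<Rightarrow> nat \<Rightarrow> (nat \<times> nat \<Rightarrow> nat) \<Rightarrow> (nat \<times> nat \<Rightarrow> nat) \<Rightarrow> bool" where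
  "tab_dom_strict lam n t s \<longleftrightarrow> tab_dom lam n t s \<and> t \<noteq> s"

definition garnir_node :: "nat list \<Rightarrow> nat \<times> nat \<Rightarrow> bool" where
  "garnir_node lam A \<longleftrightarrow> A \<in> diagram lam \<and> (fst A + 1, snd A) \<in> diagram lam"

(* Garnir tableau g^A for A = (r,c): belt filled with t^lam(r,c),...,t^lam(r+1,c),
   first along row r+1 (columns 1..c), then along row r (columns c..lam_r). *)
definition garnir_tab :: "nat list \<Rightarrow> nat \<times> nat \<Rightarrow> nat \<times> nat \<Rightarrow> nat" where
  "garnir_tab lam A x =
     (let r = fst A; c = snd A; a0 = init_tab lam (r, c) in
      if x \<in> diagram lam \<and> fst x = r + 1 \<and> snd x \<le> c then a0 + snd x - 1
      else if x \<in> diagram lam \<and> fst x = r \<and> c \<le> snd x then a0 + snd x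
      else init_tab lam x)"

end

theory Submission
  imports Defs
begin

(* The counting half of the tableau criterion for the Bruhat order turns "t dominates g^A" into
   inequalities between the numbers of small entries that t and g^A place in the first k
   positions of t^lambda.  Off the belt of A, g^A agrees with t^lambda, and it fills the belt
   with a block of consecutive entries; so for every k outside that block it places exactly
   1..k in the first k positions, and hence so does t.  This forces t to agree with t^lambda
   off the belt and to fill the belt with the same block.  On the belt both rows of t increase,
   and equal residues at the two nodes in the column of A leave only the filling of g^A: moving
   both entries would make 2 (kappa - r) odd, moving one collides with the then forced filling
   of the other row.  So t = g^A, contradicting strict dominance. *)

lemma perm_length_comp_transp_le:
  assumes "i \<in> {1..n}" "j \<in> {1..n}" "i < j" "u j \<le> u i"
  shows "perm_length n (u \<circ> transp i j) \<le> perm_length n u"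
proof -
  define inv where "inv w = {(p, q). p \<in> {1..n} \<and> q \<in> {1..n} \<and> p < q \<and> w q < w p}"
    for w :: "nat \<Rightarrow> nat"
  define \<psi> where "\<psi> = (\<lambda>(p, q). if (p = i \<and> q \<le> j) \<or> (q = j \<and> i \<le> p) then (p, q)
                         else (transp i j p, transp i j q))"
  have "\<psi> (p, q) \<in> inv u" if "(p, q) \<in> inv (u \<circ> transp i j)" for p q
    using that assms by (auto simp: inv_def \<psi>_def transp_def split: if_splits)
  then have img: "\<psi> ` inv (u \<circ> transp i j) \<subseteq> inv u"
    by auto
  have "(p, q) = (p', q')"
    if "(p, q) \<in> inv (u \<circ> transp i j)" "(p', q') \<in> inv (u \<circ> transp i j)"
      "\<psi> (p, q) = \<psi> (p', q')" for p q p' q'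
    using that assms by (auto simp: inv_def \<psi>_def transp_def split: if_splits)
  then have inj: "inj_on \<psi> (inv (u \<circ> transp i j))"
    by (auto intro: inj_onI)
  have "finite (inv u)"
    by (rule finite_subset[of _ "{1..n} \<times> {1..n}"]) (auto simp: inv_def)
  then have "card (inv (u \<circ> transp i j)) \<le> card (inv u)"
    using card_inj_on_le[OF inj img] by blast
  then show ?thesis
    by (simp add: perm_length_def inv_def)
qed

lemma bruhat_step_card_le:
  assumes "bruhat_step n u v"
  shows "card {p \<in> {1..k}. v p \<le> m} \<le> card {p \<in> {1..k}. u p \<le> m}"
proof -
  obtain i j where ij: "i \<in> {1..n}" "j \<in> {1..n}" "i < j" and v: "v = u \<circ> transp i j"
    and longer: "perm_length n u < perm_length n v"
    using assms unfolding bruhat_step_def by blast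
  have "u i < u j"
    using perm_length_comp_transp_le[OF ij, of u] longer v by force
  consider "k < i" | "j \<le> k" | "i \<le> k" "k < j"
    by linarith
  then show ?thesis
  proof cases
    case 1
    then have "{p \<in> {1..k}. v p \<le> m} = {p \<in> {1..k}. u p \<le> m}"
      using ij by (auto simp: v transp_def)
    then show ?thesis by simp
  next
    case 2
    then have "{p \<in> {1..k}. v p \<le> m} = transp i j ` {p \<in> {1..k}. u p \<le> m}"
      using ij by (force simp: v transp_def image_iff)
    moreover have "inj (transp i j)"
      by (auto simp: inj_def transp_def)
    ultimately show ?thesis
      by (simp add: card_image inj_on_subset)
  next
    case 3
    then have "{p \<in> {1..k}. v p \<le> m} \<subseteq> {p \<in> {1..k}. u p \<le> m}"
      using \<open>u i < u j\<close> ij by (auto simp: v transp_def)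
    then show ?thesis
      by (simp add: card_mono)
  qed
qed

(* The easy half of the tableau criterion for the Bruhat order. *)
lemma bruhat_le_card_le:
  assumes "bruhat_le n u v"
  shows "card {p \<in> {1..k}. v p \<le> m} \<le> card {p \<in> {1..k}. u p \<le> m}"
  using assms unfolding bruhat_le_def
proof (induction rule: rtranclp_induct)
  case (step v w)
  then show ?case
    using bruhat_step_card_le[OF step(2), of k m] by linarith
qed simp

lemma sum_list_take_mono:
  "k \<le> k' \<Longrightarrow> sum_list (take k (xs :: nat list)) \<le> sum_list (take k' xs)"
  by (metis le_add_diff_inverse le_add1 sum_list_append take_add)

lemma sum_list_take_Suc:
  "k < length xs \<Longrightarrow> sum_list (take (Suc k) (xs :: nat list)) = sum_list (take k xs) + xs ! k"
  by (simp add: take_Suc_conv_app_nth)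

lemma sum_list_take_le: "sum_list (take k (xs :: nat list)) \<le> sum_list xs"
  by (metis append_take_drop_id le_add1 sum_list_append)

lemma mem_diagram_iff:
  "(r, c) \<in> diagram lam \<longleftrightarrow> 1 \<le> r \<and> r \<le> length lam \<and> 1 \<le> c \<and> c \<le> lam ! (r - 1)"
  by (simp add: diagram_def)

lemma init_tab_diagram:
  "(r, c) \<in> diagram lam \<Longrightarrow> init_tab lam (r, c) = sum_list (take (r - 1) lam) + c"
  by (simp add: init_tab_def)

lemma init_tab_le_row_end:
  assumes "(r, c) \<in> diagram lam"
  shows "init_tab lam (r, c) \<le> sum_list (take r lam)"
  using assms sum_list_take_Suc[of "r - 1" lam]
  by (auto simp: mem_diagram_iff init_tab_diagram)

lemma inj_on_init_tab: "inj_on (init_tab lam) (diagram lam)"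
proof -
  have "r \<le> r'" if "(r, c) \<in> diagram lam" "(r', c') \<in> diagram lam"
    and "init_tab lam (r, c) = init_tab lam (r', c')" for r c r' c'
  proof (rule ccontr)
    assume "\<not> r \<le> r'"
    then have "init_tab lam (r', c') \<le> sum_list (take (r - 1) lam)"
      using init_tab_le_row_end[OF that(2)] sum_list_take_mono[of r' "r - 1" lam] by linarith
    then show False
      using that by (auto simp: init_tab_diagram mem_diagram_iff)
  qed
  then show ?thesis
    by (intro inj_onI) (metis antisym init_tab_diagram prod.collapse add_left_cancel)
qed

lemma init_tab_range:
  "x \<in> diagram lam \<Longrightarrow> init_tab lam x \<in> {1..sum_list lam}"
  using init_tab_le_row_end[of "fst x" "snd x" lam] sum_list_take_le[of "fst x" lam]
  by (cases x) (auto simp: init_tab_diagram mem_diagram_iff)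

lemma init_tab_surj:
  assumes "k \<in> {1..sum_list lam}"
  obtains x where "x \<in> diagram lam" "init_tab lam x = k"
proof -
  define r where "r = (LEAST r. k \<le> sum_list (take r lam))"
  have ex: "k \<le> sum_list (take (length lam) lam)"
    using assms by simp
  have kr: "k \<le> sum_list (take r lam)"
    unfolding r_def by (rule LeastI[of _ "length lam"], rule ex)
  have rl: "r \<le> length lam"
    unfolding r_def by (rule Least_le, rule ex)
  have r0: "r \<noteq> 0"
    using kr assms by (cases r) auto
  have km: "\<not> k \<le> sum_list (take (r - 1) lam)"
    unfolding r_def by (rule not_less_Least) (use r0 in \<open>simp add: r_def\<close>)
  have "sum_list (take r lam) = sum_list (take (r - 1) lam) + lam ! (r - 1)"
    using sum_list_take_Suc[of "r - 1" lam] r0 rl by simp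
  then have "(r, k - sum_list (take (r - 1) lam)) \<in> diagram lam"
    using r0 rl km kr by (auto simp: mem_diagram_iff)
  with km show ?thesis
    by (intro that) (auto simp: init_tab_diagram)
qed

lemma bij_betw_init_tab: "bij_betw (init_tab lam) (diagram lam) {1..sum_list lam}"
  unfolding bij_betw_def
proof
  show "init_tab lam ` diagram lam = {1..sum_list lam}"
    using init_tab_range init_tab_surj by (metis image_subset_iff subsetI subset_antisym imageI)
qed (rule inj_on_init_tab)

definition init_prefix :: "nat list \<Rightarrow> nat \<Rightarrow> (nat \<times> nat) set" where
  "init_prefix lam k = {x \<in> diagram lam. init_tab lam x \<le> k}"

lemma finite_diagram: "finite (diagram lam)"
  using bij_betw_finite[OF bij_betw_init_tab] by simp

lemma perm_of_tab_init_tab: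
  assumes "x \<in> diagram lam"
  shows "perm_of_tab lam (sum_list lam) f (init_tab lam x) = f x"
  using assms init_tab_range[OF assms]
  by (simp add: perm_of_tab_def the_inv_into_f_f[OF inj_on_init_tab])

lemma image_init_prefix:
  assumes "k \<le> sum_list lam"
  shows "init_tab lam ` init_prefix lam k = {1..k}"
proof
  show "init_tab lam ` init_prefix lam k \<subseteq> {1..k}"
    using init_tab_range by (force simp: init_prefix_def)
  show "{1..k} \<subseteq> init_tab lam ` init_prefix lam k"
  proof
    fix p assume "p \<in> {1..k}"
    with assms obtain x where "x \<in> diagram lam" "init_tab lam x = p"
      by (metis atLeastAtMost_iff init_tab_surj order_trans)
    with \<open>p \<in> {1..k}\<close> show "p \<in> init_tab lam ` init_prefix lam k"
      by (force simp: init_prefix_def)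
  qed
qed

lemma card_init_prefix:
  assumes "k \<le> sum_list lam"
  shows "card (init_prefix lam k) = k"
proof -
  have "inj_on (init_tab lam) (init_prefix lam k)"
    using inj_on_init_tab by (rule inj_on_subset) (simp add: init_prefix_def)
  then show ?thesis
    using card_image image_init_prefix[OF assms] by fastforce
qed

lemma card_perm_of_tab_prefix:
  assumes "k \<le> sum_list lam"
  shows "card {p \<in> {1..k}. perm_of_tab lam (sum_list lam) f p \<le> m}
           = card {x \<in> init_prefix lam k. f x \<le> m}"
proof -
  have "{p \<in> {1..k}. perm_of_tab lam (sum_list lam) f p \<le> m}
          = init_tab lam ` {x \<in> init_prefix lam k. f x \<le> m}"
    using image_init_prefix[OF assms]
    by (auto simp: init_prefix_def perm_of_tab_init_tab) (force simp: perm_of_tab_init_tab)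
  moreover have "inj_on (init_tab lam) {x \<in> init_prefix lam k. f x \<le> m}"
    using inj_on_init_tab by (rule inj_on_subset) (auto simp: init_prefix_def)
  ultimately show ?thesis
    by (simp add: card_image)
qed

lemma tab_dom_image_init_prefix:
  assumes n: "sum_list lam = n" and t: "tableau lam n t" and dom: "tab_dom lam n t s"
    and k: "k \<le> n" and s: "\<forall>x \<in> init_prefix lam k. s x \<le> k"
  shows "t ` init_prefix lam k = {1..k}"
proof -
  have inj: "inj_on t (init_prefix lam k)" and pos: "\<forall>x \<in> init_prefix lam k. 1 \<le> t x"
    using t by (auto simp: tableau_def bij_betw_def init_prefix_def intro: inj_on_subset)
  have fin: "finite (init_prefix lam k)"
    using finite_diagram by (simp add: init_prefix_def)
  have "card (init_prefix lam k) = card {x \<in> init_prefix lam k. s x \<le> k}"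
    using s by (metis (mono_tags, lifting) Collect_mem_eq Collect_cong)
  also have "\<dots> \<le> card {x \<in> init_prefix lam k. t x \<le> k}"
    using bruhat_le_card_le[OF dom[unfolded tab_dom_def], of k k] card_perm_of_tab_prefix k
    unfolding n[symmetric] by simp
  finally have "{x \<in> init_prefix lam k. t x \<le> k} = init_prefix lam k"
    using fin by (intro card_seteq) auto
  then have "t ` init_prefix lam k \<subseteq> {1..k}"
    using pos by auto
  moreover have "card (t ` init_prefix lam k) = k"
    using card_image[OF inj] card_init_prefix k n by simp
  ultimately show ?thesis
    by (intro card_subset_eq) auto
qed

lemma tableau_eq_init_tab:
  assumes t: "tableau lam n t"
    and prefix: "t ` init_prefix lam k = {1..k}" "t ` init_prefix lam (k - 1) = {1..k - 1}"
    and x: "x \<in> diagram lam" "init_tab lam x = k"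
  shows "t x = k"
proof (rule ccontr)
  assume "t x \<noteq> k"
  moreover have "t x \<in> {1..k}"
    using prefix(1) x by (auto simp: init_prefix_def)
  ultimately have "t x \<in> t ` init_prefix lam (k - 1)"
    unfolding prefix(2) by auto
  then obtain y where y: "y \<in> init_prefix lam (k - 1)" "t y = t x"
    by (metis imageE)
  have "y = x"
    using t y x by (auto simp: tableau_def bij_betw_def inj_on_def init_prefix_def)
  then show False
    using y x init_tab_range[OF x(1)] by (auto simp: init_prefix_def)
qed

lemma strict_mono_on_add_diff_le:
  assumes "strict_mono_on {p..q} (f :: nat \<Rightarrow> nat)" "p \<le> i" "i \<le> j" "j \<le> q"
  shows "f i + (j - i) \<le> f j"
  using assms(3,4)
proof (induction j rule: dec_induct)
  case (step m)
  then have "f m < f (Suc m)"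
    using assms(2) strict_mono_onD[OF assms(1), of m "Suc m"] by simp
  with step show ?case
    by simp
qed simp

(* Y and X are the entries of the two belt rows of a tableau, shifted so that the Garnir
   tableau has Y l = l - 1 and X j = j; the residues are those at column c, with e = kappa - r. *)
lemma two_rows_rigid:
  fixes X Y :: "nat \<Rightarrow> nat" and e :: int
  assumes c: "1 \<le> c" "c \<le> N"
    and Y: "strict_mono_on {1..c} Y" and X: "strict_mono_on {c..N} X"
    and bounds: "Y c \<le> N" "X N \<le> N"
    and disjoint: "\<And>l j. l \<in> {1..c} \<Longrightarrow> j \<in> {c..N} \<Longrightarrow> Y l \<noteq> X j"
    and res: "\<bar>e + int c - 1\<bar> = \<bar>e + int (Y c)\<bar>" "\<bar>e + int c\<bar> = \<bar>e + int (X c)\<bar>"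
  shows "\<forall>l \<in> {1..c}. Y l = l - 1" and "\<forall>j \<in> {c..N}. X j = j"
proof -
  have Y_ge: "l - 1 \<le> Y l" if "l \<in> {1..c}" for l
    using strict_mono_on_add_diff_le[OF Y, of 1 l] that by simp
  have X_le: "X j \<le> j" if "j \<in> {c..N}" for j
    using strict_mono_on_add_diff_le[OF X, of j N] that c bounds(2) by simp
  have Y_all: "\<forall>l \<in> {1..c}. Y l = l - 1" if "Y c = c - 1"
  proof
    fix l assume l: "l \<in> {1..c}"
    then show "Y l = l - 1"
      using strict_mono_on_add_diff_le[OF Y, of l c] Y_ge[OF l] that by auto
  qed
  have X_all: "\<forall>j \<in> {c..N}. X j = j" if "X c = c"
  proof
    fix j assume j: "j \<in> {c..N}"
    then show "X j = j"
      using strict_mono_on_add_diff_le[OF X, of c j] X_le[OF j] that by auto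
  qed
  have "Y c = c - 1 \<and> X c = c"
  proof (rule ccontr)
    assume "\<not> (Y c = c - 1 \<and> X c = c)"
    then consider "Y c \<noteq> c - 1" "X c \<noteq> c" | "Y c \<noteq> c - 1" "X c = c" | "Y c = c - 1" "X c \<noteq> c"
      by blast
    then show False
    proof cases
      case 1
      \<comment> \<open>Both absolute values are then resolved with a sign change, which makes \<open>2 e\<close> odd.\<close>
      have "int (Y c) \<noteq> int c - 1" "int (X c) \<noteq> int c"
        using 1 c by linarith+
      with res have "e + int (Y c) = - (e + int c - 1)" "e + int (X c) = - (e + int c)"
        unfolding abs_eq_iff by linarith+
      moreover have "c - 1 \<le> Y c" "X c \<le> c"
        using Y_ge X_le c by auto
      ultimately have "Y c = c"
        using 1 by linarith
      with \<open>e + int (Y c) = - (e + int c - 1)\<close> have "2 * e = 1 - 2 * int c"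
        by linarith
      then show False
        by presburger
    next
      case 2
      then have "Y c \<in> {c..N}"
        using Y_ge[of c] c bounds(1) by auto
      then show False
        using X_all[OF 2(2)] disjoint[of c "Y c"] c by auto
    next
      case 3
      then have "X c + 1 \<in> {1..c}"
        using X_le[of c] c by auto
      then show False
        using Y_all[OF 3(1)] disjoint[of "X c + 1" c] c by auto
    qed
  qed
  then show "\<forall>l \<in> {1..c}. Y l = l - 1" "\<forall>j \<in> {c..N}. X j = j"
    using Y_all X_all by blast+
qed

lemma nth_res_seq:
  "v \<in> {1..n} \<Longrightarrow>
    res_seq kappa lam n f ! (v - 1) = node_res kappa (the_inv_into (diagram lam) f v)"
  by (auto simp: res_seq_def simp del: upt_Suc)

locale garnir_setting =
  fixes lam :: "nat list" and n r c :: nat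
  assumes size: "sum_list lam = n" and garnir: "garnir_node lam (r, c)"
begin

abbreviation g :: "nat \<times> nat \<Rightarrow> nat" where
  "g \<equiv> garnir_tab lam (r, c)"

(* Rows of lam are 1-indexed: S counts the nodes above row r, N is the length of row r. *)
abbreviation S :: nat where
  "S \<equiv> sum_list (take (r - 1) lam)"

abbreviation N :: nat where
  "N \<equiv> lam ! (r - 1)"

definition belt_start :: nat where
  "belt_start = S + c"

definition belt_end :: nat where
  "belt_end = S + N + c"

(* belt_start = t^lambda(A) and belt_end = t^lambda(r + 1, c); the belt is defined through the
   entries of t^lambda, and mem_belt_iff recovers its shape. *)
definition belt :: "(nat \<times> nat) set" where
  "belt = {x \<in> diagram lam. init_tab lam x \<in> {belt_start..belt_end}}"

lemma garnir_bounds: "1 \<le> r" "r < length lam" "1 \<le> c" "c \<le> N" "c \<le> lam ! r"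
  using garnir by (auto simp: garnir_node_def mem_diagram_iff)

lemma init_tab_row:
  "1 \<le> j \<Longrightarrow> j \<le> N \<Longrightarrow> init_tab lam (r, j) = S + j"
  using garnir_bounds by (simp add: init_tab_diagram mem_diagram_iff)

lemma init_tab_next_row:
  assumes "1 \<le> l" "l \<le> lam ! r"
  shows "init_tab lam (r + 1, l) = S + N + l"
proof -
  have "sum_list (take r lam) = S + N"
    using sum_list_take_Suc[of "r - 1" lam] garnir_bounds by simp
  then show ?thesis
    using assms garnir_bounds by (simp add: init_tab_diagram mem_diagram_iff)
qed

lemma mem_belt_iff:
  "x \<in> belt \<longleftrightarrow>
    x \<in> diagram lam \<and> (fst x = r + 1 \<and> snd x \<le> c \<or> fst x = r \<and> c \<le> snd x)"
proof (cases "x \<in> diagram lam")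
  case True
  obtain r' c' where x: "x = (r', c')"
    by fastforce
  consider "r' < r" | "r' = r" | "r' = r + 1" | "r + 1 < r'"
    by linarith
  then show ?thesis
  proof cases
    case 1
    then have "init_tab lam x \<le> S"
      using init_tab_le_row_end[of r' c' lam] sum_list_take_mono[of r' "r - 1" lam] True x
      by fastforce
    then show ?thesis
      using 1 x garnir_bounds by (auto simp: belt_def belt_start_def)
  next
    case 2
    then show ?thesis
      using True x init_tab_row[of c'] garnir_bounds
      by (auto simp: belt_def belt_start_def belt_end_def mem_diagram_iff)
  next
    case 3
    then show ?thesis
      using True x init_tab_next_row[of c'] garnir_bounds
      by (auto simp: belt_def belt_start_def belt_end_def mem_diagram_iff)
  next
    case 4
    have "S + N + lam ! r = sum_list (take (r + 1) lam)"
      using sum_list_take_Suc[of r lam] sum_list_take_Suc[of "r - 1" lam] garnir_bounds by simp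
    also have "\<dots> \<le> sum_list (take (r' - 1) lam)"
      using 4 by (intro sum_list_take_mono) simp
    also have "\<dots> < init_tab lam x"
      using True x by (simp add: init_tab_diagram mem_diagram_iff)
    finally show ?thesis
      using 4 x garnir_bounds by (auto simp: belt_def belt_end_def)
  qed
qed (simp add: belt_def)

lemma garnir_tab_off_belt: "x \<notin> belt \<Longrightarrow> g x = init_tab lam x"
  by (auto simp: garnir_tab_def Let_def mem_belt_iff)

lemma init_tab_garnir_node: "init_tab lam (r, c) = belt_start"
  using init_tab_row[of c] garnir_bounds by (simp add: belt_start_def)

lemma garnir_tab_next_row:
  "1 \<le> l \<Longrightarrow> l \<le> c \<Longrightarrow> g (r + 1, l) = belt_start + l - 1"
  using garnir_bounds by (simp add: garnir_tab_def init_tab_garnir_node mem_diagram_iff)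

lemma garnir_tab_row:
  "c \<le> j \<Longrightarrow> j \<le> N \<Longrightarrow> g (r, j) = belt_start + j"
  using garnir_bounds by (simp add: garnir_tab_def init_tab_garnir_node mem_diagram_iff)

lemma belt_start_pos: "1 \<le> belt_start"
  using garnir_bounds by (simp add: belt_start_def)

lemma belt_start_le_end: "belt_start \<le> belt_end"
  by (simp add: belt_start_def belt_end_def)

lemma belt_end_le: "belt_end \<le> n"
  using init_tab_range[of "(r + 1, c)" lam] init_tab_next_row[of c] garnir_bounds size
  by (simp add: belt_end_def mem_diagram_iff)

lemma garnir_tab_belt:
  assumes "x \<in> belt"
  obtains "fst x = r + 1" "g x = belt_start + snd x - 1" "1 \<le> snd x" "snd x \<le> c"
  | "fst x = r" "g x = belt_start + snd x" "c \<le> snd x" "snd x \<le> N"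
  using assms garnir_tab_next_row[of "snd x"] garnir_tab_row[of "snd x"]
  by (cases x) (auto simp: mem_belt_iff mem_diagram_iff)

lemma garnir_tab_belt_range: "x \<in> belt \<Longrightarrow> g x \<in> {belt_start..belt_end}"
  using garnir_bounds by (elim garnir_tab_belt) (auto simp: belt_end_def belt_start_def)

lemma next_row_mem_belt: "l \<in> {1..c} \<Longrightarrow> (r + 1, l) \<in> belt"
  using garnir_bounds by (simp add: mem_belt_iff mem_diagram_iff)

lemma row_mem_belt: "j \<in> {c..N} \<Longrightarrow> (r, j) \<in> belt"
  using garnir_bounds by (simp add: mem_belt_iff mem_diagram_iff)

lemma garnir_tab_init_prefix:
  assumes "k < belt_start \<or> belt_end \<le> k"
  shows "\<forall>x \<in> init_prefix lam k. g x \<le> k"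
proof
  fix x assume x: "x \<in> init_prefix lam k"
  show "g x \<le> k"
  proof (cases "x \<in> belt")
    case True
    then show ?thesis
      using assms x garnir_tab_belt_range[OF True] by (auto simp: belt_def init_prefix_def)
  next
    case False
    then show ?thesis
      using x garnir_tab_off_belt by (simp add: init_prefix_def)
  qed
qed

lemma inj_on_garnir_tab: "inj_on g (diagram lam)"
proof (rule inj_onI)
  fix x y assume x: "x \<in> diagram lam" and y: "y \<in> diagram lam" and eq: "g x = g y"
  have off_belt: "g z \<notin> {belt_start..belt_end}" if "z \<in> diagram lam" "z \<notin> belt" for z
    using that garnir_tab_off_belt by (simp add: belt_def)
  show "x = y"
  proof (cases "x \<in> belt"; cases "y \<in> belt")
    assume "x \<in> belt" "y \<in> belt"
    with eq garnir_bounds show ?thesis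
      by (elim garnir_tab_belt; simp add: prod_eq_iff)
  next
    assume "x \<notin> belt" "y \<notin> belt"
    with eq x y show ?thesis
      using inj_on_init_tab by (simp add: garnir_tab_off_belt inj_on_def)
  qed (use x y eq garnir_tab_belt_range off_belt in metis)+
qed

lemma node_res_garnir_tab_inv:
  assumes "d \<le> N"
  shows "node_res kappa (the_inv_into (diagram lam) g (belt_start + d))
           = nat \<bar>kappa + int d - int r\<bar>"
proof (cases "d < c")
  case True
  then have "(r + 1, d + 1) \<in> diagram lam" "g (r + 1, d + 1) = belt_start + d"
    using garnir_bounds garnir_tab_next_row[of "d + 1"] by (auto simp: mem_diagram_iff)
  then show ?thesis
    by (simp add: the_inv_into_f_eq[OF inj_on_garnir_tab] node_res_def)
next
  case False
  then have "(r, d) \<in> diagram lam" "g (r, d) = belt_start + d"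
    using assms garnir_bounds garnir_tab_row[of d] by (auto simp: mem_diagram_iff)
  then show ?thesis
    by (simp add: the_inv_into_f_eq[OF inj_on_garnir_tab] node_res_def)
qed

end

locale garnir_dominated = garnir_setting +
  fixes t :: "nat \<times> nat \<Rightarrow> nat"
  assumes tab: "tableau lam n t" and dom: "tab_dom lam n t (garnir_tab lam (r, c))"
begin

lemma inj_on_tab: "inj_on t (diagram lam)"
  using tab by (simp add: tableau_def bij_betw_def)

lemma image_init_prefix_off_belt:
  assumes "k \<le> n" "k < belt_start \<or> belt_end \<le> k"
  shows "t ` init_prefix lam k = {1..k}"
  using tab_dom_image_init_prefix[OF size tab dom assms(1) garnir_tab_init_prefix[OF assms(2)]] .

lemma tab_off_belt:
  assumes "x \<in> diagram lam" "x \<notin> belt"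
  shows "t x = init_tab lam x"
proof -
  define k where "k = init_tab lam x"
  have k: "k \<le> n" "k < belt_start \<or> belt_end < k"
    using assms init_tab_range[of x lam] size by (auto simp: k_def belt_def)
  have "t ` init_prefix lam k = {1..k}"
    by (rule image_init_prefix_off_belt) (use k in auto)
  moreover have "t ` init_prefix lam (k - 1) = {1..k - 1}"
    by (rule image_init_prefix_off_belt) (use k in auto)
  ultimately show ?thesis
    using tableau_eq_init_tab[OF tab _ _ assms(1)] unfolding k_def by blast
qed

lemma tab_belt_range:
  assumes x: "x \<in> belt"
  shows "t x \<in> {belt_start..belt_end}"
proof -
  have x_prefix: "x \<in> init_prefix lam belt_end" "x \<notin> init_prefix lam (belt_start - 1)"
    and xD: "x \<in> diagram lam"
    using x belt_start_pos by (auto simp: belt_def init_prefix_def)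
  have end_prefix: "t ` init_prefix lam belt_end = {1..belt_end}"
    by (rule image_init_prefix_off_belt) (use belt_end_le in simp_all)
  have start_prefix: "t ` init_prefix lam (belt_start - 1) = {1..belt_start - 1}"
    by (rule image_init_prefix_off_belt)
      (use belt_start_pos belt_start_le_end belt_end_le in auto)
  have "t x \<in> {1..belt_end}"
    using x_prefix(1) end_prefix by blast
  moreover have "t x \<notin> {1..belt_start - 1}"
  proof
    assume "t x \<in> {1..belt_start - 1}"
    then obtain y where "y \<in> init_prefix lam (belt_start - 1)" "t y = t x"
      unfolding start_prefix[symmetric] by (metis imageE)
    with x_prefix(2) xD show False
      using inj_on_tab by (auto simp: inj_on_def init_prefix_def)
  qed
  ultimately show ?thesis
    by auto
qed

lemma tab_belt_bounds:
  assumes "x \<in> belt"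
  shows "belt_start \<le> t x" "t x \<le> belt_start + N"
  using tab_belt_range[OF assms] by (simp_all add: belt_start_def belt_end_def)

lemma strict_mono_on_belt_row:
  assumes "row_strict lam t" and "\<And>l. l \<in> I \<Longrightarrow> (i, l) \<in> belt"
  shows "strict_mono_on I (\<lambda>l. t (i, l) - belt_start)"
proof (rule strict_mono_onI)
  fix l l' assume "l \<in> I" "l' \<in> I" "l < l'"
  with assms have "t (i, l) < t (i, l')"
    by (simp add: row_strict_def belt_def)
  with tab_belt_bounds[OF assms(2)[OF \<open>l \<in> I\<close>]]
  show "t (i, l) - belt_start < t (i, l') - belt_start"
    by linarith
qed

lemma node_res_belt:
  assumes res: "res_seq kappa lam n t = res_seq kappa lam n g" and x: "x \<in> belt"
  shows "node_res kappa x = nat \<bar>kappa + int (t x - belt_start) - int r\<bar>"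
proof -
  have xD: "x \<in> diagram lam"
    using x by (simp add: belt_def)
  obtain d where d: "t x = belt_start + d" "d \<le> N"
    using tab_belt_bounds[OF x] le_Suc_ex by fastforce
  have tx_n: "t x \<in> {1..n}"
    using tab_belt_range[OF x] belt_start_pos belt_end_le by auto
  have "node_res kappa x = node_res kappa (the_inv_into (diagram lam) t (t x))"
    by (simp add: the_inv_into_f_f[OF inj_on_tab xD])
  also have "\<dots> = res_seq kappa lam n t ! (t x - 1)"
    by (rule nth_res_seq[OF tx_n, symmetric])
  also have "\<dots> = res_seq kappa lam n g ! (t x - 1)"
    by (simp only: res)
  also have "\<dots> = node_res kappa (the_inv_into (diagram lam) g (t x))"
    by (rule nth_res_seq[OF tx_n])
  also have "\<dots> = nat \<bar>kappa + int (t x - belt_start) - int r\<bar>"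
    using node_res_garnir_tab_inv[OF d(2)] d(1) by simp
  finally show ?thesis .
qed

lemma tab_belt_rows:
  assumes rs: "row_strict lam t" and res: "res_seq kappa lam n t = res_seq kappa lam n g"
  shows "\<forall>l \<in> {1..c}. t (r + 1, l) = g (r + 1, l)"
    and "\<forall>j \<in> {c..N}. t (r, j) = g (r, j)"
proof -
  define Y where "Y = (\<lambda>l. t (r + 1, l) - belt_start)"
  define X where "X = (\<lambda>j. t (r, j) - belt_start)"
  have c_lower: "c \<in> {1..c}" and c_upper: "c \<in> {c..N}" and N_upper: "N \<in> {c..N}"
    using garnir_bounds by auto
  have bounds: "Y c \<le> N" "X N \<le> N"
    using tab_belt_bounds[OF next_row_mem_belt[OF c_lower]]
      tab_belt_bounds[OF row_mem_belt[OF N_upper]]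
    unfolding X_def Y_def by linarith+
  have disjoint: "Y l \<noteq> X j" if "l \<in> {1..c}" "j \<in> {c..N}" for l j
  proof
    assume "Y l = X j"
    with tab_belt_bounds[OF next_row_mem_belt[OF that(1)]]
      tab_belt_bounds[OF row_mem_belt[OF that(2)]]
    have "t (r + 1, l) = t (r, j)"
      unfolding X_def Y_def by linarith
    then have "(r + 1, l) = (r, j)"
      using next_row_mem_belt[OF that(1)] row_mem_belt[OF that(2)]
      by (intro inj_onD[OF inj_on_tab]) (simp_all add: belt_def)
    then show False
      by simp
  qed
  have res_lower: "\<bar>(kappa - int r) + int c - 1\<bar> = \<bar>(kappa - int r) + int (Y c)\<bar>"
    using node_res_belt[OF res next_row_mem_belt[OF c_lower]] garnir_bounds
    by (simp add: node_res_def Y_def eq_nat_nat_iff algebra_simps)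
  have res_upper: "\<bar>(kappa - int r) + int c\<bar> = \<bar>(kappa - int r) + int (X c)\<bar>"
    using node_res_belt[OF res row_mem_belt[OF c_upper]]
    by (simp add: node_res_def X_def eq_nat_nat_iff algebra_simps)
  have Y_eq: "\<forall>l \<in> {1..c}. Y l = l - 1" and X_eq: "\<forall>j \<in> {c..N}. X j = j"
    using two_rows_rigid[OF garnir_bounds(3,4)
        strict_mono_on_belt_row[OF rs next_row_mem_belt, folded Y_def]
        strict_mono_on_belt_row[OF rs row_mem_belt, folded X_def]
        bounds disjoint res_lower res_upper]
    by blast+
  show "\<forall>l \<in> {1..c}. t (r + 1, l) = g (r + 1, l)"
  proof
    fix l assume l: "l \<in> {1..c}"
    then show "t (r + 1, l) = g (r + 1, l)"
      using bspec[OF Y_eq l] tab_belt_bounds(1)[OF next_row_mem_belt[OF l]]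
        garnir_tab_next_row[of l]
      by (auto simp: Y_def)
  qed
  show "\<forall>j \<in> {c..N}. t (r, j) = g (r, j)"
  proof
    fix j assume j: "j \<in> {c..N}"
    then show "t (r, j) = g (r, j)"
      using bspec[OF X_eq j] tab_belt_bounds(1)[OF row_mem_belt[OF j]] garnir_tab_row[of j]
      by (auto simp: X_def)
  qed
qed

lemma eq_garnir_tab:
  assumes "row_strict lam t" and "res_seq kappa lam n t = res_seq kappa lam n g"
  shows "t = g"
proof
  fix x
  show "t x = g x"
  proof (cases "x \<in> belt")
    case True
    then show ?thesis
      using tab_belt_rows[OF assms] by (cases x) (auto simp: mem_belt_iff mem_diagram_iff)
  next
    case False
    show ?thesis
    proof (cases "x \<in> diagram lam")
      case True
      with \<open>x \<notin> belt\<close> show ?thesis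
        by (simp add: tab_off_belt garnir_tab_off_belt)
    next
      case False
      then have "t x = 0"
        using tab unfolding tableau_def by blast
      moreover have "g x = 0"
        using False \<open>x \<notin> belt\<close> by (simp add: garnir_tab_off_belt init_tab_def)
      ultimately show ?thesis
        by simp
    qed
  qed
qed

end

theorem mainTheorem15:
  fixes lam :: "nat list" and n :: nat and kappa :: int and A :: "nat \<times> nat"
  assumes "is_partition lam n"
    and "garnir_node lam A"
  shows "\<not> (\<exists>t. tableau lam n t \<and> row_strict lam t
               \<and> tab_dom_strict lam n t (garnir_tab lam A)
               \<and> res_seq kappa lam n t = res_seq kappa lam n (garnir_tab lam A))"
proof
  assume "\<exists>t. tableau lam n t \<and> row_strict lam t
               \<and> tab_dom_strict lam n t (garnir_tab lam A)
               \<and> res_seq kappa lam n t = res_seq kappa lam n (garnir_tab lam A)"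
  then obtain t where t: "tableau lam n t" "row_strict lam t"
      "tab_dom_strict lam n t (garnir_tab lam A)"
      "res_seq kappa lam n t = res_seq kappa lam n (garnir_tab lam A)"
    by blast
  obtain r c where A: "A = (r, c)"
    by fastforce
  interpret garnir_dominated lam n r c t
    using assms t A by unfold_locales (simp_all add: is_partition_def tab_dom_strict_def)
  have "t = garnir_tab lam A"
    using eq_garnir_tab t(2,4) A by simp
  with t(3) show False
    by (simp add: tab_dom_strict_def)
qed

end
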